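(* Let $A\in\mathbb{C}^{n\times m}$, $\alpha_1\ge1/\sqrt{n}$, $\alpha_2\ge1/\sqrt{m}$, $B\in\mathbb{C}^{l\times n}$, $b\in\mathbb{R}^l$, $D\in\mathbb{C}^{q\times m}$, $d\in\mathbb{R}^q$, and let $$S_1=\{u\in\mathbb{C}^n:\|u\|\le\alpha_1,\ \operatorname{Re}(u)\ge0,\ \mathbf 1_n^Tu=1,\ \operatorname{Re}(Bu)\le b\},\quad S_2=\{v\in\mathbb{C}^m:\|v\|\le\alpha_2,\ \operatorname{Re}(v)\ge0,\ \mathbf 1_m^Tv=1,\ \operatorname{Re}(Dv)\ge d\}.$$ Assume there exist $u\in S_1$, $v\in S_2$ for which all defining inequality constraints of $S_1$ and $S_2$ hold strictly. Call $(u^\star,v^\star)\in S_1\times S_2$ a saddle-point equilibrium if $u^\star$ maximizes $\operatorname{Re}(u^HAv^\star)$ over $u\in S_1$ and $v^\star$ minimizes $\operatorname{Re}(u^{\star H}Av)$ over $v\in S_2$. Consider the problems $$\text{(P)}\quad \min_{v,\lambda_1,\beta_1,\rho_1,r_1}\ \lambda_1^Tb+\alpha_1\|\beta_1\|+\operatorname{Re}(\rho_1)\quad\text{s.t.}\quad Av-B^H\lambda_1-\beta_1+r_1-\bar\rho_1\mathbf 1_n=0,\ \operatorname{Re}(Dv)\ge d,\ \|v\|\le\alpha_2,\ \mathbf 1_m^Tv=1,\ \operatorname{Re}(v)\ge0,\ r_1\ge0,\ \lambda_1\ge0,$$ over $v\in\mathbb{C}^m$, $\lambda_1\in\mathbb{R}^l$,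 $\beta_1\in\mathbb{C}^n$, $\rho_1\in\mathbb{C}$, $r_1\in\mathbb{R}^n$, and $$\text{(D)}\quad \max_{u,\lambda_2,\beta_2,\rho_2,r_2}\ \lambda_2^Td-\alpha_2\|\beta_2\|-\operatorname{Re}(\rho_2)\quad\text{s.t.}\quad A^Hu-D^H\lambda_2+\beta_2-r_2+\bar\rho_2\mathbf 1_m=0,\ \operatorname{Re}(Bu)\le b,\ \|u\|\le\alpha_1,\ \mathbf 1_n^Tu=1,\ \operatorname{Re}(u)\ge0,\ r_2\ge0,\ \lambda_2\ge0,$$ over $u\in\mathbb{C}^n$, $\lambda_2\in\mathbb{R}^q$, $\beta_2\in\mathbb{C}^m$, $\rho_2\in\mathbb{C}$, $r_2\in\mathbb{R}^m$. Then $(u^\star,v^\star)$ is a saddle-point equilibrium if and only if there exist $(\rho_1^\star,r_1^\star,\lambda_1^\star,\beta_1^\star)$ and $(\rho_2^\star,r_2^\star,\lambda_2^\star,\beta_2^\star)$ such that $(v^\star,\lambda_1^\star,\beta_1^\star,\rho_1^\star,r_1^\star)$ is optimal for (P) and $(u^\star,\lambda_2^\star,\beta_2^\star,\rho_2^\star,r_2^\star)$ is optimal for (D).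
   Context: $\|\cdot\|$ is the Euclidean norm, $^H$ is conjugate transpose, $\bar\rho$ is complex conjugation, $\mathbf 1_k$ is the all-ones vector in $\mathbb{R}^k$, and inequalities between real vectors are componentwise. *)

theory Defs
  imports "HOL-Analysis.Analysis"
begin

text \<open>Complex vectors are elements of complex ^ 'n; a matrix in C^{n x m} is complex ^ 'm ^ 'n
  (rows indexed by 'n). Real vectors are real ^ 'l. The Euclidean norm is the library norm.\<close>

definition ctrans :: "complex ^ 'm ^ 'n \<Rightarrow> complex ^ 'n ^ 'm" where
  "ctrans A = (\<chi> j i. cnj (A $ i $ j))"

definition cinner :: "complex ^ 'n \<Rightarrow> complex ^ 'n \<Rightarrow> complex" where
  "cinner u w = (\<Sum>i\<in>UNIV. cnj (u $ i) * w $ i)"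

definition cvec :: "real ^ 'n \<Rightarrow> complex ^ 'n" where
  "cvec x = (\<chi> i. complex_of_real (x $ i))"

definition ones :: "complex ^ 'n" where
  "ones = (\<chi> i. 1)"

definition S1 :: "real \<Rightarrow> complex ^ 'n ^ 'l \<Rightarrow> real ^ 'l \<Rightarrow> (complex ^ 'n) set" where
  "S1 \<alpha>1 B b = {u. norm u \<le> \<alpha>1 \<and> (\<forall>i. 0 \<le> Re (u $ i)) \<and> (\<Sum>i\<in>UNIV. u $ i) = 1
                    \<and> (\<forall>k. Re ((B *v u) $ k) \<le> b $ k)}"

definition S2 :: "real \<Rightarrow> complex ^ 'm ^ 'q \<Rightarrow> real ^ 'q \<Rightarrow> (complex ^ 'm) set" where
  "S2 \<alpha>2 D d = {v. norm v \<le> \<alpha>2 \<and> (\<forall>i. 0 \<le> Re (v $ i)) \<and> (\<Sum>i\<in>UNIV. v $ i) = 1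
                    \<and> (\<forall>k. d $ k \<le> Re ((D *v v) $ k))}"

definition saddle_point ::
  "complex ^ 'm ^ 'n \<Rightarrow> (complex ^ 'n) set \<Rightarrow> (complex ^ 'm) set
     \<Rightarrow> complex ^ 'n \<Rightarrow> complex ^ 'm \<Rightarrow> bool" where
  "saddle_point A X Y us vs \<longleftrightarrow> us \<in> X \<and> vs \<in> Y
     \<and> (\<forall>u\<in>X. Re (cinner u (A *v vs)) \<le> Re (cinner us (A *v vs)))
     \<and> (\<forall>v\<in>Y. Re (cinner us (A *v vs)) \<le> Re (cinner us (A *v v)))"

definition P_feasible ::
  "complex ^ 'm ^ 'n \<Rightarrow> complex ^ 'n ^ 'l \<Rightarrow> complex ^ 'm ^ 'q \<Rightarrow> real ^ 'q \<Rightarrow> real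
   \<Rightarrow> complex ^ 'm \<Rightarrow> real ^ 'l \<Rightarrow> complex ^ 'n \<Rightarrow> complex \<Rightarrow> real ^ 'n \<Rightarrow> bool" where
  "P_feasible A B D d \<alpha>2 v lam1 \<beta>1 \<rho>1 r1 \<longleftrightarrow>
     (A *v v) - (ctrans B *v cvec lam1) - \<beta>1 + cvec r1 - (\<chi> i. cnj \<rho>1) = 0
     \<and> (\<forall>k. d $ k \<le> Re ((D *v v) $ k)) \<and> norm v \<le> \<alpha>2 \<and> (\<Sum>i\<in>UNIV. v $ i) = 1
     \<and> (\<forall>i. 0 \<le> Re (v $ i)) \<and> (\<forall>i. 0 \<le> r1 $ i) \<and> (\<forall>k. 0 \<le> lam1 $ k)"

definition P_obj :: "real ^ 'l \<Rightarrow> real \<Rightarrow> real ^ 'l \<Rightarrow> complex ^ 'n \<Rightarrow> complex \<Rightarrow> real" where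
  "P_obj b \<alpha>1 lam1 \<beta>1 \<rho>1 = (\<Sum>k\<in>UNIV. lam1 $ k * b $ k) + \<alpha>1 * norm \<beta>1 + Re \<rho>1"

definition P_optimal ::
  "complex ^ 'm ^ 'n \<Rightarrow> complex ^ 'n ^ 'l \<Rightarrow> real ^ 'l \<Rightarrow> complex ^ 'm ^ 'q \<Rightarrow> real ^ 'q
   \<Rightarrow> real \<Rightarrow> real
   \<Rightarrow> complex ^ 'm \<Rightarrow> real ^ 'l \<Rightarrow> complex ^ 'n \<Rightarrow> complex \<Rightarrow> real ^ 'n \<Rightarrow> bool" where
  "P_optimal A B b D d \<alpha>1 \<alpha>2 v lam1 \<beta>1 \<rho>1 r1 \<longleftrightarrow>
     P_feasible A B D d \<alpha>2 v lam1 \<beta>1 \<rho>1 r1 \<and>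
     (\<forall>v' lam1' \<beta>1' \<rho>1' r1'. P_feasible A B D d \<alpha>2 v' lam1' \<beta>1' \<rho>1' r1' \<longrightarrow>
        P_obj b \<alpha>1 lam1 \<beta>1 \<rho>1 \<le> P_obj b \<alpha>1 lam1' \<beta>1' \<rho>1')"

definition D_feasible ::
  "complex ^ 'm ^ 'n \<Rightarrow> complex ^ 'n ^ 'l \<Rightarrow> real ^ 'l \<Rightarrow> complex ^ 'm ^ 'q \<Rightarrow> real
   \<Rightarrow> complex ^ 'n \<Rightarrow> real ^ 'q \<Rightarrow> complex ^ 'm \<Rightarrow> complex \<Rightarrow> real ^ 'm \<Rightarrow> bool" where
  "D_feasible A B b D \<alpha>1 u lam2 \<beta>2 \<rho>2 r2 \<longleftrightarrow>
     (ctrans A *v u) - (ctrans D *v cvec lam2) + \<beta>2 - cvec r2 + (\<chi> i. cnj \<rho>2) = 0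
     \<and> (\<forall>k. Re ((B *v u) $ k) \<le> b $ k) \<and> norm u \<le> \<alpha>1 \<and> (\<Sum>i\<in>UNIV. u $ i) = 1
     \<and> (\<forall>i. 0 \<le> Re (u $ i)) \<and> (\<forall>i. 0 \<le> r2 $ i) \<and> (\<forall>k. 0 \<le> lam2 $ k)"

definition D_obj :: "real ^ 'q \<Rightarrow> real \<Rightarrow> real ^ 'q \<Rightarrow> complex ^ 'm \<Rightarrow> complex \<Rightarrow> real" where
  "D_obj d \<alpha>2 lam2 \<beta>2 \<rho>2 = (\<Sum>k\<in>UNIV. lam2 $ k * d $ k) - \<alpha>2 * norm \<beta>2 - Re \<rho>2"

definition D_optimal ::
  "complex ^ 'm ^ 'n \<Rightarrow> complex ^ 'n ^ 'l \<Rightarrow> real ^ 'l \<Rightarrow> complex ^ 'm ^ 'q \<Rightarrow> real ^ 'q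
   \<Rightarrow> real \<Rightarrow> real
   \<Rightarrow> complex ^ 'n \<Rightarrow> real ^ 'q \<Rightarrow> complex ^ 'm \<Rightarrow> complex \<Rightarrow> real ^ 'm \<Rightarrow> bool" where
  "D_optimal A B b D d \<alpha>1 \<alpha>2 u lam2 \<beta>2 \<rho>2 r2 \<longleftrightarrow>
     D_feasible A B b D \<alpha>1 u lam2 \<beta>2 \<rho>2 r2 \<and>
     (\<forall>u' lam2' \<beta>2' \<rho>2' r2'. D_feasible A B b D \<alpha>1 u' lam2' \<beta>2' \<rho>2' r2' \<longrightarrow>
        D_obj d \<alpha>2 lam2' \<beta>2' \<rho>2' \<le> D_obj d \<alpha>2 lam2 \<beta>2 \<rho>2)"

end

theory Submission
  imports Defs
begin

text \<open>
  For fixed v, maximising Re(u^H A v) over S1 is a convex program satisfying Slater's condition,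
  so by Lagrange duality (proved with a separating hyperplane) its value is the least dual value
  lambda^T b + alpha1 norm(beta) + Re rho over all representations
  A v = B^H lambda + beta - r + conj(rho) 1 with lambda, r >= 0; the ball and the orthant are
  kept as the domain of the program and are eliminated at the end by cutting off the negative
  real parts of the multiplier. Hence (P) computes min_v max_u and, symmetrically, (D) computes
  max_u min_v. A saddle point exists by Brouwer's theorem applied to the projected gradient map,
  so both optimal values equal the value of the game, and weak duality then shows that the
  optimal solutions of (P) and (D) are exactly the saddle points.
\<close>

section \<open>Lagrange multipliers for convex programs\<close>

lemma nonneg_if_bounded_below_on_ray:
  fixes c m :: real
  assumes "\<And>t. 0 \<le> t \<Longrightarrow> 0 \<le> c + t * m"
  shows "0 \<le> m"
proof (rule ccontr)
  assume "\<not> 0 \<le> m"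
  then have "0 \<le> (\<bar>c\<bar> + 1) / - m" and "((\<bar>c\<bar> + 1) / - m) * m = - (\<bar>c\<bar> + 1)"
    by (auto intro: divide_nonneg_neg)
  with assms[of "(\<bar>c\<bar> + 1) / - m"] show False by linarith
qed

lemma nonneg_at_bound_if_nonneg_above:
  fixes a m x :: real
  assumes "0 \<le> m" and above: "\<And>t. a < t \<Longrightarrow> 0 \<le> x + m * t"
  shows "0 \<le> x + m * a"
proof -
  have "- (x + m * a) \<le> 0"
  proof (rule field_le_epsilon)
    fix e :: real assume "0 < e"
    then have "0 \<le> x + m * (a + e / (m + 1))"
      using \<open>0 \<le> m\<close> by (intro above) simp
    moreover have "m * (e / (m + 1)) \<le> e"
      using \<open>0 < e\<close> \<open>0 \<le> m\<close> by (simp add: field_simps)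
    ultimately show "- (x + m * a) \<le> 0 + e"
      unfolding distrib_left by linarith
  qed
  then show ?thesis
    by simp
qed

lemma convex_on_linear_plus_const:
  assumes "linear h" "convex C"
  shows "convex_on C (\<lambda>x. h x + a)"
  using assms by (simp add: convex_on_def linear_add linear_scale algebra_simps flip: distrib_right)

lemma convex_perturbation_set:
  fixes f :: "'a::euclidean_space \<Rightarrow> real" and g :: "'a \<Rightarrow> real ^ 'j"
    and T :: "'a \<Rightarrow> 'b::euclidean_space"
  assumes f: "convex_on C f" and g: "\<And>j. convex_on C (\<lambda>u. g u $ j)" and T: "linear T"
  shows "convex {(s, T u - c, t) | u s t. u \<in> C \<and> (\<forall>j. g u $ j \<le> s $ j) \<and> f u - L < t}"
    (is "convex ?K")
proof (rule convexI)
  fix x y and p q :: real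
  assume "x \<in> ?K" "y \<in> ?K" and pq: "0 \<le> p" "0 \<le> q" "p + q = 1"
  then obtain u1 s1 t1 u2 s2 t2 where x: "x = (s1, T u1 - c, t1)" and y: "y = (s2, T u2 - c, t2)"
    and u1: "u1 \<in> C" "\<forall>j. g u1 $ j \<le> s1 $ j" "f u1 - L < t1"
    and u2: "u2 \<in> C" "\<forall>j. g u2 $ j \<le> s2 $ j" "f u2 - L < t2"
    by blast
  define u where "u = p *\<^sub>R u1 + q *\<^sub>R u2"
  have "u \<in> C"
    using f u1 u2 pq by (auto simp: u_def convex_on_def convex_def)
  moreover have "g u $ j \<le> (p *\<^sub>R s1 + q *\<^sub>R s2) $ j" for j
  proof -
    have "g u $ j \<le> p * g u1 $ j + q * g u2 $ j"
      using g[of j] u1 u2 pq by (simp add: u_def convex_on_def)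
    also have "\<dots> \<le> p * s1 $ j + q * s2 $ j"
      using u1 u2 pq by (intro add_mono mult_left_mono) auto
    finally show ?thesis
      by simp
  qed
  moreover have "f u - L < p * t1 + q * t2"
  proof -
    have "f u \<le> p * f u1 + q * f u2"
      using f u1 u2 pq by (simp add: u_def convex_on_def)
    moreover have "p * (f u1 - L - t1) + q * (f u2 - L - t2) < 0"
      using u1 u2 pq by (intro convex_bound_lt) auto
    moreover have "L = p * L + q * L"
      using pq by (simp flip: distrib_right)
    ultimately show ?thesis
      unfolding right_diff_distrib by linarith
  qed
  moreover have "T u - c = p *\<^sub>R (T u1 - c) + q *\<^sub>R (T u2 - c)"
    using pq by (simp add: u_def linear_add[OF T] linear_scale[OF T] algebra_simps flip: scaleR_add_left)
  ultimately show "p *\<^sub>R x + q *\<^sub>R y \<in> ?K"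
    unfolding x y by force
qed

lemma convex_program_separation:
  fixes f :: "'a::euclidean_space \<Rightarrow> real" and g :: "'a \<Rightarrow> real ^ 'j"
    and T :: "'a \<Rightarrow> 'b::euclidean_space"
  assumes f: "convex_on C f" and g: "\<And>j. convex_on C (\<lambda>u. g u $ j)" and T: "linear T"
    and lower: "\<And>u. u \<in> C \<Longrightarrow> \<forall>j. g u $ j \<le> 0 \<Longrightarrow> T u = c \<Longrightarrow> L \<le> f u"
  obtains \<mu> \<nu> m where "(\<mu>, \<nu>, m) \<noteq> 0"
    and "\<And>u s t. u \<in> C \<Longrightarrow> \<forall>j. g u $ j \<le> s $ j \<Longrightarrow> f u - L < t
           \<Longrightarrow> 0 \<le> \<mu> \<bullet> s + \<nu> \<bullet> (T u - c) + m * t"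
proof -
  define K where "K = {(s, T u - c, t) | u s t. u \<in> C \<and> (\<forall>j. g u $ j \<le> s $ j) \<and> f u - L < t}"
  have "0 \<notin> K"
    using lower by (fastforce simp: K_def zero_prod_def)
  moreover have "convex K"
    unfolding K_def by (rule convex_perturbation_set[OF f g T])
  ultimately obtain a where a: "a \<noteq> 0" "\<forall>x\<in>K. 0 \<le> a \<bullet> x"
    using separating_hyperplane_set_0 by blast
  obtain \<mu> \<nu> m where a_eq: "a = (\<mu>, \<nu>, m)"
    using prod_cases3 by blast
  show thesis
  proof (rule that)
    show "(\<mu>, \<nu>, m) \<noteq> 0"
      using a a_eq by simp
    fix u s t assume "u \<in> C" "\<forall>j. g u $ j \<le> s $ j" "f u - L < t"
    then have "(s, T u - c, t) \<in> K"
      unfolding K_def by blast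
    then have "0 \<le> a \<bullet> (s, T u - c, t)"
      using a(2) by blast
    then show "0 \<le> \<mu> \<bullet> s + \<nu> \<bullet> (T u - c) + m * t"
      by (simp add: a_eq add.assoc)
  qed
qed

lemma convex_program_fritz_john:
  fixes f :: "'a::euclidean_space \<Rightarrow> real" and g :: "'a \<Rightarrow> real ^ 'j"
    and T :: "'a \<Rightarrow> 'b::euclidean_space"
  assumes f: "convex_on C f" and g: "\<And>j. convex_on C (\<lambda>u. g u $ j)" and T: "linear T"
    and lower: "\<And>u. u \<in> C \<Longrightarrow> \<forall>j. g u $ j \<le> 0 \<Longrightarrow> T u = c \<Longrightarrow> L \<le> f u"
    and "u0 \<in> C"
  obtains \<mu> \<nu> m where "(\<mu>, \<nu>, m) \<noteq> 0" "\<forall>j. 0 \<le> \<mu> $ j" "0 \<le> m"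
    and "\<And>u. u \<in> C \<Longrightarrow> 0 \<le> \<mu> \<bullet> g u + \<nu> \<bullet> (T u - c) + m * (f u - L)"
proof -
  obtain \<mu> \<nu> m where nz: "(\<mu>, \<nu>, m) \<noteq> 0"
    and sep: "\<And>u s t. u \<in> C \<Longrightarrow> \<forall>j. g u $ j \<le> s $ j \<Longrightarrow> f u - L < t
                \<Longrightarrow> 0 \<le> \<mu> \<bullet> s + \<nu> \<bullet> (T u - c) + m * t"
    using convex_program_separation[OF f g T lower] by blast
  define c0 where "c0 = \<mu> \<bullet> g u0 + \<nu> \<bullet> (T u0 - c) + m * (f u0 - L + 1)"
  have \<mu>: "0 \<le> \<mu> $ j" for j
  proof (rule nonneg_if_bounded_below_on_ray)
    fix t :: real assume "0 \<le> t"
    then have "0 \<le> \<mu> \<bullet> (g u0 + t *\<^sub>R axis j 1) + \<nu> \<bullet> (T u0 - c) + m * (f u0 - L + 1)"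
      using \<open>u0 \<in> C\<close> by (intro sep) (auto simp: axis_def)
    then show "0 \<le> c0 + t * \<mu> $ j"
      by (simp add: c0_def inner_axis algebra_simps)
  qed
  have m: "0 \<le> m"
  proof (rule nonneg_if_bounded_below_on_ray)
    fix t :: real assume "0 \<le> t"
    then have "0 \<le> \<mu> \<bullet> g u0 + \<nu> \<bullet> (T u0 - c) + m * (f u0 - L + 1 + t)"
      using \<open>u0 \<in> C\<close> by (intro sep) auto
    then show "0 \<le> c0 + t * m"
      by (simp add: c0_def algebra_simps)
  qed
  show thesis
  proof (rule that[OF nz _ m])
    show "\<forall>j. 0 \<le> \<mu> $ j"
      using \<mu> by blast
    fix u assume "u \<in> C"
    show "0 \<le> \<mu> \<bullet> g u + \<nu> \<bullet> (T u - c) + m * (f u - L)"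
      by (rule nonneg_at_bound_if_nonneg_above[OF m], rule sep[OF \<open>u \<in> C\<close>]) auto
  qed
qed

lemma slater_degenerate_multipliers_vanish:
  fixes g :: "'a::euclidean_space \<Rightarrow> real ^ 'j" and T :: "'a \<Rightarrow> 'b::euclidean_space"
  assumes T: "linear T" "surj T"
    and slater: "u0 \<in> interior C" "\<forall>j. g u0 $ j < 0" "T u0 = c"
    and \<mu>: "\<forall>j. 0 \<le> \<mu> $ j"
    and nonneg: "\<And>u. u \<in> C \<Longrightarrow> 0 \<le> \<mu> \<bullet> g u + \<nu> \<bullet> (T u - c)"
  shows "\<mu> = 0" and "\<nu> = 0"
proof -
  have "0 \<le> \<mu> \<bullet> g u0"
    using nonneg[of u0] slater interior_subset by force
  then have "(\<Sum>j\<in>UNIV. - (\<mu> $ j * g u0 $ j)) = 0"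
    using \<mu> slater(2) by (intro antisym sum_nonneg)
      (auto simp: inner_vec_def sum_negf mult_nonneg_nonpos less_imp_le)
  then have "\<mu> $ j * g u0 $ j = 0" for j
    using \<mu> slater(2) by (subst (asm) sum_nonneg_eq_0_iff) (auto simp: mult_nonneg_nonpos less_imp_le)
  then show "\<mu> = 0"
    using slater(2) by (simp add: vec_eq_iff) (metis less_irrefl)
  obtain v where v: "T v = \<nu>"
    using T(2) by (metis surjD)
  obtain e where "0 < e" "ball u0 e \<subseteq> C"
    using slater(1) mem_interior by blast
  have "0 < norm v + 1"
    using norm_ge_zero[of v] by linarith
  define \<delta> where "\<delta> = e / 2 / (norm v + 1)"
  have "0 < \<delta>"
    unfolding \<delta>_def using \<open>0 < e\<close> \<open>0 < norm v + 1\<close> by (intro divide_pos_pos) auto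
  have "\<delta> * (norm v + 1) = e / 2"
    unfolding \<delta>_def using \<open>0 < norm v + 1\<close> by (simp add: divide_eq_eq)
  then have "\<delta> * norm v < e"
    using \<open>0 < \<delta>\<close> \<open>0 < e\<close> by (simp add: distrib_left)
  then have "u0 - \<delta> *\<^sub>R v \<in> C"
    using \<open>ball u0 e \<subseteq> C\<close> \<open>0 < \<delta>\<close> by (auto simp: dist_norm)
  then have "0 \<le> \<nu> \<bullet> (T (u0 - \<delta> *\<^sub>R v) - c)"
    using nonneg \<open>\<mu> = 0\<close> by force
  also have "\<dots> = - \<delta> * (\<nu> \<bullet> \<nu>)"
    using slater(3) v by (simp add: linear_diff[OF T(1)] linear_scale[OF T(1)])
  finally show "\<nu> = 0"
    using \<open>0 < \<delta>\<close> by (simp add: mult_le_0_iff) (metis inner_gt_zero_iff not_le)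
qed

lemma slater_lagrange_multipliers:
  fixes f :: "'a::euclidean_space \<Rightarrow> real" and g :: "'a \<Rightarrow> real ^ 'j"
    and T :: "'a \<Rightarrow> 'b::euclidean_space"
  assumes f: "convex_on C f" and g: "\<And>j. convex_on C (\<lambda>u. g u $ j)" and T: "linear T" "surj T"
    and lower: "\<And>u. u \<in> C \<Longrightarrow> \<forall>j. g u $ j \<le> 0 \<Longrightarrow> T u = c \<Longrightarrow> L \<le> f u"
    and slater: "u0 \<in> interior C" "\<forall>j. g u0 $ j < 0" "T u0 = c"
  obtains \<mu> \<nu> where "\<forall>j. 0 \<le> \<mu> $ j" "\<And>u. u \<in> C \<Longrightarrow> L \<le> f u + \<mu> \<bullet> g u + \<nu> \<bullet> (T u - c)"
proof -
  obtain \<mu> \<nu> m where nz: "(\<mu>, \<nu>, m) \<noteq> 0" and \<mu>: "\<forall>j. 0 \<le> \<mu> $ j" and "0 \<le> m"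
    and fj: "\<And>u. u \<in> C \<Longrightarrow> 0 \<le> \<mu> \<bullet> g u + \<nu> \<bullet> (T u - c) + m * (f u - L)"
    using convex_program_fritz_john[OF f g T(1) lower] slater(1) interior_subset by blast
  have "m \<noteq> 0"
  proof
    assume "m = 0"
    then have "\<mu> = 0" "\<nu> = 0"
      using slater_degenerate_multipliers_vanish[where g = g and \<nu> = \<nu>, OF T slater \<mu>] fj
      by auto
    with nz \<open>m = 0\<close> show False
      by (simp add: zero_prod_def)
  qed
  with \<open>0 \<le> m\<close> have "0 < m"
    by simp
  show thesis
  proof (rule that)
    show "\<forall>j. 0 \<le> (\<mu> /\<^sub>R m) $ j"
      using \<mu> \<open>0 < m\<close> by simp
    fix u assume "u \<in> C"
    then show "L \<le> f u + (\<mu> /\<^sub>R m) \<bullet> g u + (\<nu> /\<^sub>R m) \<bullet> (T u - c)"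
      using fj[of u] \<open>0 < m\<close> by (simp add: field_simps)
  qed
qed

section \<open>Complex vectors as a real inner product space\<close>

lemma Re_cinner: "Re (cinner u w) = u \<bullet> w"
  by (simp add: cinner_def inner_vec_def inner_complex_def)

lemma cinner_ctrans_right: "cinner u (ctrans B *v x) = cnj (cinner x (B *v u))"
  by (simp add: cinner_def ctrans_def matrix_vector_mult_def sum_distrib_left sum_distrib_right mult_ac)
     (rule sum.swap)

lemma inner_ctrans_right: "u \<bullet> (ctrans B *v x) = (B *v u) \<bullet> x"
  using Re_cinner[of u "ctrans B *v x"] Re_cinner[of x "B *v u"]
  by (simp add: cinner_ctrans_right inner_commute)

lemma inner_cvec_right: "u \<bullet> cvec r = (\<Sum>i\<in>UNIV. r $ i * Re (u $ i))"
  by (simp add: inner_vec_def inner_complex_def cvec_def mult.commute)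

lemma inner_const_vec_right: "u \<bullet> (\<chi> i. z) = (\<Sum>i\<in>UNIV. u $ i) \<bullet> z"
  by (simp add: inner_vec_def inner_sum_left)

lemma uminus_matrix_vector_mult:
  fixes M :: "'a::ring_1 ^ 'n ^ 'm"
  shows "(- M) *v x = - (M *v x)"
  by (simp add: matrix_vector_mult_def vec_eq_iff sum_negf)

lemma ctrans_uminus: "ctrans (- D) = - ctrans D"
  by (simp add: ctrans_def vec_eq_iff)

lemma linear_Re_matrix_vector_component: "linear (\<lambda>u. Re ((B *v u) $ k))"
  by (simp add: linear_iff matrix_vector_mult_def sum.distrib sum_distrib_left algebra_simps sum_subtractf)

lemma linear_sum_components: "linear (\<lambda>u :: 'a::real_vector ^ 'n. \<Sum>i\<in>UNIV. u $ i)"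
  by (simp add: linear_iff sum.distrib scaleR_sum_right)

lemma surj_sum_components: "surj (\<lambda>u :: 'a::real_vector ^ 'n. \<Sum>i\<in>UNIV. u $ i)"
proof (rule surjI)
  fix z :: 'a
  show "(\<Sum>i\<in>UNIV. axis undefined z $ i) = z"
    by (simp add: axis_def)
qed

section \<open>Duality for linear functions on the strategy sets\<close>

lemma ball_orthant_dual_decomposition:
  fixes w :: "complex ^ 'n"
  assumes "0 \<le> \<alpha>" and bound: "\<And>u. norm u \<le> \<alpha> \<Longrightarrow> \<forall>i. 0 \<le> Re (u $ i) \<Longrightarrow> u \<bullet> w \<le> M"
  obtains \<beta> r where "\<forall>i. 0 \<le> r $ i" "w = \<beta> - cvec r" "\<alpha> * norm \<beta> \<le> M"
proof -
  define \<beta> where "\<beta> = (\<chi> i. Complex (max (Re (w $ i)) 0) (Im (w $ i)))"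
  define r where "r = (\<chi> i. max (- Re (w $ i)) 0)"
  have "\<forall>i. 0 \<le> r $ i"
    by (simp add: r_def)
  moreover have "w = \<beta> - cvec r"
    by (simp add: vec_eq_iff complex_eq_iff \<beta>_def r_def cvec_def max_def)
  moreover have "\<alpha> * norm \<beta> \<le> M"
  proof (cases "\<beta> = 0")
    case True
    then show ?thesis
      using bound[of 0] \<open>0 \<le> \<alpha>\<close> by simp
  next
    case False
    define u where "u = (\<alpha> / norm \<beta>) *\<^sub>R \<beta>"
    have "\<beta> $ i \<bullet> w $ i = \<beta> $ i \<bullet> \<beta> $ i" for i
      by (cases "0 \<le> Re (w $ i)") (simp_all add: \<beta>_def inner_complex_def)
    then have "\<beta> \<bullet> w = \<beta> \<bullet> \<beta>"
      by (simp add: inner_vec_def)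
    then have "u \<bullet> w = \<alpha> * norm \<beta>"
      using False by (simp add: u_def power2_eq_square flip: power2_norm_eq_inner)
    moreover have "norm u \<le> \<alpha>" "\<forall>i. 0 \<le> Re (u $ i)"
      using False \<open>0 \<le> \<alpha>\<close> by (auto simp: u_def \<beta>_def)
    ultimately show ?thesis
      using bound by metis
  qed
  ultimately show thesis
    by (rule that)
qed

definition dual_vector ::
  "complex ^ 'n ^ 'l \<Rightarrow> real ^ 'l \<Rightarrow> complex ^ 'n \<Rightarrow> complex \<Rightarrow> real ^ 'n \<Rightarrow> complex ^ 'n" where
  "dual_vector B l \<beta> \<rho> r = ctrans B *v cvec l + \<beta> - cvec r + (\<chi> i. cnj \<rho>)"

lemma inner_dual_vector_right:
  "u \<bullet> dual_vector B l \<beta> \<rho> r = (\<Sum>k\<in>UNIV. l $ k * Re ((B *v u) $ k)) + u \<bullet> \<beta>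
     - (\<Sum>i\<in>UNIV. r $ i * Re (u $ i)) + (\<Sum>i\<in>UNIV. u $ i) \<bullet> cnj \<rho>"
  by (simp add: dual_vector_def inner_add_right inner_diff_right inner_ctrans_right
      inner_cvec_right inner_const_vec_right)

lemma S1_weak_duality:
  assumes "u \<in> S1 \<alpha> B b" "\<forall>k. 0 \<le> l $ k" "\<forall>i. 0 \<le> r $ i"
  shows "Re (cinner u (dual_vector B l \<beta> \<rho> r)) \<le> P_obj b \<alpha> l \<beta> \<rho>"
proof -
  have "(\<Sum>k\<in>UNIV. l $ k * Re ((B *v u) $ k)) \<le> (\<Sum>k\<in>UNIV. l $ k * b $ k)"
    using assms by (intro sum_mono mult_left_mono) (auto simp: S1_def)
  moreover have "u \<bullet> \<beta> \<le> \<alpha> * norm \<beta>"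
  proof -
    have "u \<bullet> \<beta> \<le> norm u * norm \<beta>"
      by (rule norm_cauchy_schwarz)
    also have "\<dots> \<le> \<alpha> * norm \<beta>"
      using assms(1) by (intro mult_right_mono) (auto simp: S1_def)
    finally show ?thesis .
  qed
  moreover have "0 \<le> (\<Sum>i\<in>UNIV. r $ i * Re (u $ i))"
    using assms by (intro sum_nonneg) (auto simp: S1_def)
  moreover have "(\<Sum>i\<in>UNIV. u $ i) \<bullet> cnj \<rho> = Re \<rho>"
    using assms(1) by (simp add: S1_def inner_complex_def)
  ultimately show ?thesis
    by (simp add: Re_cinner inner_dual_vector_right P_obj_def)
qed

lemma convex_Re_nonneg_orthant: "convex {u :: complex ^ 'n. \<forall>i. 0 \<le> Re (u $ i)}"
  by (auto simp: convex_def)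

lemma interior_ball_Re_orthant:
  fixes u :: "complex ^ 'n"
  assumes "norm u < \<alpha>" "\<forall>i. 0 < Re (u $ i)"
  shows "u \<in> interior (cball 0 \<alpha> \<inter> {u. \<forall>i. 0 \<le> Re (u $ i)})"
proof (rule interiorI)
  have "{u :: complex ^ 'n. \<forall>i. 0 < Re (u $ i)} = (\<Inter>i. {u. 0 < Re (u $ i)})"
    by auto
  also have "open \<dots>"
    by (intro open_INT ballI open_Collect_less continuous_intros) auto
  finally show "open (ball 0 \<alpha> \<inter> {u :: complex ^ 'n. \<forall>i. 0 < Re (u $ i)})"
    by blast
qed (use assms in \<open>auto simp: less_imp_le\<close>)

lemma S1_lagrangian_bound:
  fixes B :: "complex ^ 'n ^ 'l" and w :: "complex ^ 'n"
  assumes slater: "\<exists>u\<in>S1 \<alpha> B b. norm u < \<alpha> \<and> (\<forall>i. 0 < Re (u $ i)) \<and> (\<forall>k. Re ((B *v u) $ k) < b $ k)"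
    and bound: "\<forall>u\<in>S1 \<alpha> B b. Re (cinner u w) \<le> M"
  obtains \<mu> \<nu> where "\<forall>k. 0 \<le> \<mu> $ k"
    "\<And>u. norm u \<le> \<alpha> \<Longrightarrow> \<forall>i. 0 \<le> Re (u $ i)
       \<Longrightarrow> u \<bullet> (w - ctrans B *v cvec \<mu> - (\<chi> i. \<nu>)) \<le> M - (\<Sum>k\<in>UNIV. \<mu> $ k * b $ k) - Re \<nu>"
proof -
  obtain u0 where u0: "u0 \<in> S1 \<alpha> B b" "norm u0 < \<alpha>" "\<forall>i. 0 < Re (u0 $ i)"
    "\<forall>k. Re ((B *v u0) $ k) < b $ k"
    using slater by blast
  define C where "C = cball 0 \<alpha> \<inter> {u :: complex ^ 'n. \<forall>i. 0 \<le> Re (u $ i)}"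
  define g where "g u = (\<chi> k. Re ((B *v u) $ k) - b $ k)" for u
  have "convex C"
    unfolding C_def by (intro convex_Int convex_cball convex_Re_nonneg_orthant)
  obtain \<mu> \<nu> where \<mu>: "\<forall>k. 0 \<le> \<mu> $ k"
    and lagrange: "\<And>u. u \<in> C \<Longrightarrow> - M \<le> - (u \<bullet> w) + \<mu> \<bullet> g u + \<nu> \<bullet> ((\<Sum>i\<in>UNIV. u $ i) - 1)"
  proof (rule slater_lagrange_multipliers[of C "\<lambda>u. - (u \<bullet> w)" g "\<lambda>u. \<Sum>i\<in>UNIV. u $ i"])
    show "convex_on C (\<lambda>u. - (u \<bullet> w))"
      using convex_on_linear_plus_const[of "\<lambda>u. - (u \<bullet> w)" C 0] \<open>convex C\<close>
      by (simp add: linear_iff inner_add_left)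
    show "convex_on C (\<lambda>u. g u $ k)" for k
      using convex_on_linear_plus_const[OF linear_Re_matrix_vector_component \<open>convex C\<close>, of B k "- b $ k"]
      by (simp add: g_def)
    show "- M \<le> - (u \<bullet> w)" if "u \<in> C" "\<forall>k. g u $ k \<le> 0" "(\<Sum>i\<in>UNIV. u $ i) = 1" for u
      using that bound by (auto simp: C_def g_def S1_def Re_cinner)
    show "u0 \<in> interior C"
      unfolding C_def using u0 by (intro interior_ball_Re_orthant) auto
    show "\<forall>k. g u0 $ k < 0" "(\<Sum>i\<in>UNIV. u0 $ i) = 1"
      using u0 by (auto simp: g_def S1_def)
  qed (use linear_sum_components surj_sum_components in auto)
  show thesis
  proof (rule that[OF \<mu>])
    fix u :: "complex ^ 'n" assume "norm u \<le> \<alpha>" "\<forall>i. 0 \<le> Re (u $ i)"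
    then have "u \<in> C"
      by (simp add: C_def)
    moreover have "\<mu> \<bullet> g u = (\<Sum>k\<in>UNIV. \<mu> $ k * Re ((B *v u) $ k)) - (\<Sum>k\<in>UNIV. \<mu> $ k * b $ k)"
      by (simp add: g_def inner_vec_def sum_subtractf right_diff_distrib)
    moreover have "\<nu> \<bullet> (\<Sum>i\<in>UNIV. u $ i) = (\<Sum>i\<in>UNIV. u $ i) \<bullet> \<nu>"
      by (rule inner_commute)
    ultimately show "u \<bullet> (w - ctrans B *v cvec \<mu> - (\<chi> i. \<nu>)) \<le> M - (\<Sum>k\<in>UNIV. \<mu> $ k * b $ k) - Re \<nu>"
      using lagrange[of u]
      by (simp add: inner_diff_right inner_ctrans_right inner_cvec_right inner_const_vec_right)
  qed
qed

lemma S1_strong_duality: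
  fixes B :: "complex ^ 'n ^ 'l" and w :: "complex ^ 'n"
  assumes slater: "\<exists>u\<in>S1 \<alpha> B b. norm u < \<alpha> \<and> (\<forall>i. 0 < Re (u $ i)) \<and> (\<forall>k. Re ((B *v u) $ k) < b $ k)"
    and bound: "\<forall>u\<in>S1 \<alpha> B b. Re (cinner u w) \<le> M"
  obtains l \<beta> \<rho> r where "\<forall>k. 0 \<le> l $ k" "\<forall>i. 0 \<le> r $ i" "w = dual_vector B l \<beta> \<rho> r"
    "P_obj b \<alpha> l \<beta> \<rho> \<le> M"
proof -
  obtain \<mu> \<nu> where \<mu>: "\<forall>k. 0 \<le> \<mu> $ k"
    and lagrange: "\<And>u. norm u \<le> \<alpha> \<Longrightarrow> \<forall>i. 0 \<le> Re (u $ i)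
       \<Longrightarrow> u \<bullet> (w - ctrans B *v cvec \<mu> - (\<chi> i. \<nu>)) \<le> M - (\<Sum>k\<in>UNIV. \<mu> $ k * b $ k) - Re \<nu>"
    using S1_lagrangian_bound[OF slater bound] by blast
  obtain u0 :: "complex ^ 'n" where "norm u0 < \<alpha>"
    using slater by blast
  then have "0 \<le> \<alpha>"
    using norm_ge_zero[of u0] by linarith
  then obtain \<beta> r where r: "\<forall>i. 0 \<le> r $ i" and "w - ctrans B *v cvec \<mu> - (\<chi> i. \<nu>) = \<beta> - cvec r"
    and \<beta>: "\<alpha> * norm \<beta> \<le> M - (\<Sum>k\<in>UNIV. \<mu> $ k * b $ k) - Re \<nu>"
    by (rule ball_orthant_dual_decomposition[OF _ lagrange])
  then have "w = dual_vector B \<mu> \<beta> (cnj \<nu>) r"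
    by (simp add: dual_vector_def algebra_simps)
  moreover have "P_obj b \<alpha> \<mu> \<beta> (cnj \<nu>) \<le> M"
    using \<beta> by (simp add: P_obj_def)
  ultimately show thesis
    using that \<mu> r by blast
qed

lemma convex_S1: "convex (S1 \<alpha> B b)"
proof (rule convexI)
  fix x y and p q :: real
  assume x: "x \<in> S1 \<alpha> B b" and y: "y \<in> S1 \<alpha> B b" and pq: "0 \<le> p" "0 \<le> q" "p + q = 1"
  have "p *\<^sub>R x + q *\<^sub>R y \<in> cball 0 \<alpha>"
    using x y pq by (intro convexD[OF convex_cball]) (auto simp: S1_def)
  moreover have "\<forall>i. 0 \<le> Re ((p *\<^sub>R x + q *\<^sub>R y) $ i)"
    using x y pq by (simp add: S1_def)
  moreover have "(\<Sum>i\<in>UNIV. (p *\<^sub>R x + q *\<^sub>R y) $ i) = 1"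
    using x y pq by (simp add: S1_def sum.distrib flip: scaleR_sum_right scaleR_add_left)
  moreover have "Re ((B *v (p *\<^sub>R x + q *\<^sub>R y)) $ k) \<le> b $ k" for k
    using x y pq linear_Re_matrix_vector_component[of B k]
    by (simp add: S1_def linear_add linear_scale convex_bound_le)
  ultimately show "p *\<^sub>R x + q *\<^sub>R y \<in> S1 \<alpha> B b"
    by (simp add: S1_def)
qed

lemma compact_S1: "compact (S1 \<alpha> B b)"
  unfolding compact_eq_bounded_closed
proof
  show "bounded (S1 \<alpha> B b)"
    unfolding bounded_iff S1_def by auto
  have "S1 \<alpha> B b = cball 0 \<alpha> \<inter> (\<Inter>i. {u. 0 \<le> Re (u $ i)}) \<inter> {u. (\<Sum>i\<in>UNIV. u $ i) = 1}
      \<inter> (\<Inter>k. {u. Re ((B *v u) $ k) \<le> b $ k})"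
    by (auto simp: S1_def)
  moreover have "continuous_on UNIV (\<lambda>u. Re ((B *v u) $ k))" for k
    using linear_Re_matrix_vector_component by (intro linear_continuous_on) (simp add: linear_conv_bounded_linear)
  ultimately show "closed (S1 \<alpha> B b)"
    by (auto intro!: closed_Int closed_INT closed_Collect_le closed_Collect_eq continuous_intros)
qed

lemma S2_eq_S1: "S2 \<alpha> D d = S1 \<alpha> (- D) (- d)"
  by (auto simp: S1_def S2_def uminus_matrix_vector_mult)

section \<open>Saddle points and the problems (P) and (D)\<close>

lemma saddle_point_exists:
  fixes A :: "complex ^ 'm ^ 'n"
  assumes X: "compact X" "convex X" "X \<noteq> {}" and Y: "compact Y" "convex Y" "Y \<noteq> {}"
  obtains u v where "saddle_point A X Y u v"
proof -
  have "closed X" "closed Y"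
    using X Y compact_imp_closed by auto
  define F where
    "F z = (closest_point X (fst z + A *v snd z), closest_point Y (snd z - ctrans A *v fst z))" for z
  have "continuous_on (X \<times> Y) F"
    unfolding F_def
    by (intro continuous_on_Pair
        continuous_on_compose2[OF continuous_on_closest_point[OF X(2) \<open>closed X\<close> X(3)]]
        continuous_on_compose2[OF continuous_on_closest_point[OF Y(2) \<open>closed Y\<close> Y(3)]]
        continuous_intros matrix_vector_mul_bounded_linear[THEN bounded_linear.continuous_on]) auto
  moreover have "F \<in> X \<times> Y \<rightarrow> X \<times> Y"
    using closest_point_in_set[OF \<open>closed X\<close> X(3)] closest_point_in_set[OF \<open>closed Y\<close> Y(3)]
    by (auto simp: F_def)
  ultimately obtain z where "z \<in> X \<times> Y" "F z = z"
    using brouwer[OF compact_Times[OF X(1) Y(1)] convex_Times[OF X(2) Y(2)]] X(3) Y(3) by blast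
  moreover obtain u v where "z = (u, v)"
    by fastforce
  ultimately have "u \<in> X" "v \<in> Y" "F (u, v) = (u, v)"
    by auto
  then have u: "closest_point X (u + A *v v) = u" and v: "closest_point Y (v - ctrans A *v u) = v"
    by (auto simp: F_def)
  have "Re (cinner x (A *v v)) \<le> Re (cinner u (A *v v))" if "x \<in> X" for x
    using closest_point_dot[OF X(2) \<open>closed X\<close> that, of "u + A *v v"]
    by (simp add: u Re_cinner inner_diff_right inner_commute)
  moreover have "Re (cinner u (A *v v)) \<le> Re (cinner u (A *v y))" if "y \<in> Y" for y
    using closest_point_dot[OF Y(2) \<open>closed Y\<close> that, of "v - ctrans A *v u"]
    by (simp add: v Re_cinner inner_diff_right inner_ctrans_right inner_commute
        matrix_vector_mult_diff_distrib)
  ultimately have "saddle_point A X Y u v"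
    using \<open>u \<in> X\<close> \<open>v \<in> Y\<close> by (simp add: saddle_point_def)
  then show thesis
    by (rule that)
qed

lemma P_feasible_iff:
  "P_feasible A B D d \<alpha>2 v l \<beta> \<rho> r \<longleftrightarrow> v \<in> S2 \<alpha>2 D d \<and> (\<forall>k. 0 \<le> l $ k) \<and> (\<forall>i. 0 \<le> r $ i)
     \<and> A *v v = dual_vector B l \<beta> \<rho> r"
  by (auto simp: P_feasible_def S2_def dual_vector_def algebra_simps)

lemma D_feasible_iff:
  "D_feasible A B b D \<alpha>1 u l \<beta> \<rho> r \<longleftrightarrow> u \<in> S1 \<alpha>1 B b \<and> (\<forall>k. 0 \<le> l $ k) \<and> (\<forall>i. 0 \<le> r $ i)
     \<and> - (ctrans A *v u) = dual_vector (- D) l \<beta> \<rho> r"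
proof -
  have eq: "ctrans A *v u - ctrans D *v cvec l + \<beta> - cvec r + (\<chi> i. cnj \<rho>)
      = ctrans A *v u + dual_vector (- D) l \<beta> \<rho> r"
    by (simp add: dual_vector_def ctrans_uminus uminus_matrix_vector_mult)
  show ?thesis
    unfolding D_feasible_def eq neg_eq_iff_add_eq_0 by (auto simp: S1_def)
qed

lemma D_obj_eq_neg_P_obj: "D_obj d \<alpha> l \<beta> \<rho> = - P_obj (- d) \<alpha> l \<beta> \<rho>"
  by (simp add: D_obj_def P_obj_def sum_negf)

lemma P_weak_duality:
  assumes "P_feasible A B D d \<alpha>2 v l \<beta> \<rho> r" "u \<in> S1 \<alpha>1 B b"
  shows "Re (cinner u (A *v v)) \<le> P_obj b \<alpha>1 l \<beta> \<rho>"
  using assms S1_weak_duality by (auto simp: P_feasible_iff)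

lemma D_weak_duality:
  assumes "D_feasible A B b D \<alpha>1 u l \<beta> \<rho> r" "v \<in> S2 \<alpha>2 D d"
  shows "D_obj d \<alpha>2 l \<beta> \<rho> \<le> Re (cinner u (A *v v))"
proof -
  have "Re (cinner v (- (ctrans A *v u))) \<le> P_obj (- d) \<alpha>2 l \<beta> \<rho>"
    using assms S1_weak_duality[of v \<alpha>2 "- D" "- d" l r \<beta> \<rho>] by (auto simp: D_feasible_iff S2_eq_S1)
  then show ?thesis
    by (simp add: D_obj_eq_neg_P_obj Re_cinner inner_ctrans_right inner_commute)
qed

lemma saddle_point_P_certificate:
  assumes slater1: "\<exists>u\<in>S1 \<alpha>1 B b. norm u < \<alpha>1 \<and> (\<forall>i. 0 < Re (u $ i)) \<and> (\<forall>k. Re ((B *v u) $ k) < b $ k)"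
    and saddle: "saddle_point A (S1 \<alpha>1 B b) (S2 \<alpha>2 D d) us vs"
  obtains l \<beta> \<rho> r where "P_feasible A B D d \<alpha>2 vs l \<beta> \<rho> r"
    "P_obj b \<alpha>1 l \<beta> \<rho> \<le> Re (cinner us (A *v vs))"
proof -
  have "\<forall>u\<in>S1 \<alpha>1 B b. Re (cinner u (A *v vs)) \<le> Re (cinner us (A *v vs))"
    using saddle by (simp add: saddle_point_def)
  with slater1 obtain l \<beta> \<rho> r where "\<forall>k. 0 \<le> l $ k" "\<forall>i. 0 \<le> r $ i"
    "A *v vs = dual_vector B l \<beta> \<rho> r" "P_obj b \<alpha>1 l \<beta> \<rho> \<le> Re (cinner us (A *v vs))"
    by (rule S1_strong_duality)
  with saddle show thesis
    by (intro that) (auto simp: P_feasible_iff saddle_point_def)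
qed

lemma saddle_point_D_certificate:
  assumes slater2: "\<exists>v\<in>S2 \<alpha>2 D d. norm v < \<alpha>2 \<and> (\<forall>i. 0 < Re (v $ i)) \<and> (\<forall>k. d $ k < Re ((D *v v) $ k))"
    and saddle: "saddle_point A (S1 \<alpha>1 B b) (S2 \<alpha>2 D d) us vs"
  obtains l \<beta> \<rho> r where "D_feasible A B b D \<alpha>1 us l \<beta> \<rho> r"
    "Re (cinner us (A *v vs)) \<le> D_obj d \<alpha>2 l \<beta> \<rho>"
proof -
  have "\<exists>v\<in>S1 \<alpha>2 (- D) (- d). norm v < \<alpha>2 \<and> (\<forall>i. 0 < Re (v $ i))
      \<and> (\<forall>k. Re ((- D *v v) $ k) < (- d) $ k)"
    using slater2 by (simp add: S2_eq_S1 uminus_matrix_vector_mult)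
  moreover have "\<forall>v\<in>S1 \<alpha>2 (- D) (- d). Re (cinner v (- (ctrans A *v us))) \<le> - Re (cinner us (A *v vs))"
    using saddle by (simp add: saddle_point_def S2_eq_S1 Re_cinner inner_ctrans_right inner_commute)
  ultimately obtain l \<beta> \<rho> r where "\<forall>k. 0 \<le> l $ k" "\<forall>i. 0 \<le> r $ i"
    "- (ctrans A *v us) = dual_vector (- D) l \<beta> \<rho> r"
    "P_obj (- d) \<alpha>2 l \<beta> \<rho> \<le> - Re (cinner us (A *v vs))"
    by (rule S1_strong_duality)
  with saddle show thesis
    by (intro that) (auto simp: D_feasible_iff saddle_point_def D_obj_eq_neg_P_obj)
qed

lemma P_optimal_if_saddle_value:
  assumes saddle: "saddle_point A (S1 \<alpha>1 B b) (S2 \<alpha>2 D d) us vs"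
    and feasible: "P_feasible A B D d \<alpha>2 vs l \<beta> \<rho> r"
    and attains: "P_obj b \<alpha>1 l \<beta> \<rho> \<le> Re (cinner us (A *v vs))"
  shows "P_optimal A B b D d \<alpha>1 \<alpha>2 vs l \<beta> \<rho> r"
  unfolding P_optimal_def
proof (intro conjI allI impI feasible)
  fix v' l' \<beta>' \<rho>' r' assume feasible': "P_feasible A B D d \<alpha>2 v' l' \<beta>' \<rho>' r'"
  then have "Re (cinner us (A *v vs)) \<le> Re (cinner us (A *v v'))"
    using saddle by (auto simp: saddle_point_def P_feasible_iff)
  also have "\<dots> \<le> P_obj b \<alpha>1 l' \<beta>' \<rho>'"
    using feasible' saddle by (intro P_weak_duality) (auto simp: saddle_point_def)
  finally show "P_obj b \<alpha>1 l \<beta> \<rho> \<le> P_obj b \<alpha>1 l' \<beta>' \<rho>'"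
    using attains by linarith
qed

lemma D_optimal_if_saddle_value:
  assumes saddle: "saddle_point A (S1 \<alpha>1 B b) (S2 \<alpha>2 D d) us vs"
    and feasible: "D_feasible A B b D \<alpha>1 us l \<beta> \<rho> r"
    and attains: "Re (cinner us (A *v vs)) \<le> D_obj d \<alpha>2 l \<beta> \<rho>"
  shows "D_optimal A B b D d \<alpha>1 \<alpha>2 us l \<beta> \<rho> r"
  unfolding D_optimal_def
proof (intro conjI allI impI feasible)
  fix u' l' \<beta>' \<rho>' r' assume feasible': "D_feasible A B b D \<alpha>1 u' l' \<beta>' \<rho>' r'"
  then have "D_obj d \<alpha>2 l' \<beta>' \<rho>' \<le> Re (cinner u' (A *v vs))"
    using saddle by (intro D_weak_duality) (auto simp: saddle_point_def)
  also have "\<dots> \<le> Re (cinner us (A *v vs))"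
    using feasible' saddle by (auto simp: saddle_point_def D_feasible_iff)
  finally show "D_obj d \<alpha>2 l' \<beta>' \<rho>' \<le> D_obj d \<alpha>2 l \<beta> \<rho>"
    using attains by linarith
qed

lemma optimal_imp_saddle_point:
  assumes slater1: "\<exists>u\<in>S1 \<alpha>1 B b. norm u < \<alpha>1 \<and> (\<forall>i. 0 < Re (u $ i)) \<and> (\<forall>k. Re ((B *v u) $ k) < b $ k)"
    and slater2: "\<exists>v\<in>S2 \<alpha>2 D d. norm v < \<alpha>2 \<and> (\<forall>i. 0 < Re (v $ i)) \<and> (\<forall>k. d $ k < Re ((D *v v) $ k))"
    and P: "P_optimal A B b D d \<alpha>1 \<alpha>2 vs l1 \<beta>1 \<rho>1 r1"
    and D: "D_optimal A B b D d \<alpha>1 \<alpha>2 us l2 \<beta>2 \<rho>2 r2"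
  shows "saddle_point A (S1 \<alpha>1 B b) (S2 \<alpha>2 D d) us vs"
proof -
  obtain u0 v0 where saddle0: "saddle_point A (S1 \<alpha>1 B b) (S2 \<alpha>2 D d) u0 v0"
    using saddle_point_exists[OF compact_S1 convex_S1 _ compact_S1 convex_S1] slater1 slater2
    by (metis S2_eq_S1 empty_iff)
  obtain l \<beta> \<rho> r where "P_feasible A B D d \<alpha>2 v0 l \<beta> \<rho> r"
    and "P_obj b \<alpha>1 l \<beta> \<rho> \<le> Re (cinner u0 (A *v v0))"
    using saddle_point_P_certificate[OF slater1 saddle0] .
  moreover obtain l' \<beta>' \<rho>' r' where "D_feasible A B b D \<alpha>1 u0 l' \<beta>' \<rho>' r'"
    and "Re (cinner u0 (A *v v0)) \<le> D_obj d \<alpha>2 l' \<beta>' \<rho>'"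
    using saddle_point_D_certificate[OF slater2 saddle0] .
  ultimately have gap: "P_obj b \<alpha>1 l1 \<beta>1 \<rho>1 \<le> D_obj d \<alpha>2 l2 \<beta>2 \<rho>2"
    using P D unfolding P_optimal_def D_optimal_def by force
  have feasible: "P_feasible A B D d \<alpha>2 vs l1 \<beta>1 \<rho>1 r1" "D_feasible A B b D \<alpha>1 us l2 \<beta>2 \<rho>2 r2"
    using P D by (simp_all add: P_optimal_def D_optimal_def)
  then have "us \<in> S1 \<alpha>1 B b" "vs \<in> S2 \<alpha>2 D d"
    by (simp_all add: P_feasible_iff D_feasible_iff)
  moreover have "Re (cinner u (A *v vs)) \<le> Re (cinner us (A *v vs))" if "u \<in> S1 \<alpha>1 B b" for u
    using P_weak_duality[OF feasible(1) that] gap D_weak_duality[OF feasible(2) \<open>vs \<in> S2 \<alpha>2 D d\<close>]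
    by linarith
  moreover have "Re (cinner us (A *v vs)) \<le> Re (cinner us (A *v v))" if "v \<in> S2 \<alpha>2 D d" for v
    using P_weak_duality[OF feasible(1) \<open>us \<in> S1 \<alpha>1 B b\<close>] gap D_weak_duality[OF feasible(2) that]
    by linarith
  ultimately show ?thesis
    by (simp add: saddle_point_def)
qed

theorem theorem5:
  fixes A :: "complex ^ 'm ^ 'n" and B :: "complex ^ 'n ^ 'l" and b :: "real ^ 'l"
    and D :: "complex ^ 'm ^ 'q" and d :: "real ^ 'q"
    and \<alpha>1 \<alpha>2 :: real and us :: "complex ^ 'n" and vs :: "complex ^ 'm"
  assumes h\<alpha>1: "\<alpha>1 \<ge> 1 / sqrt (real CARD('n))"
    and h\<alpha>2: "\<alpha>2 \<ge> 1 / sqrt (real CARD('m))"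
    and slater1: "\<exists>u\<in>S1 \<alpha>1 B b. norm u < \<alpha>1 \<and> (\<forall>i. 0 < Re (u $ i))
                     \<and> (\<forall>k. Re ((B *v u) $ k) < b $ k)"
    and slater2: "\<exists>v\<in>S2 \<alpha>2 D d. norm v < \<alpha>2 \<and> (\<forall>i. 0 < Re (v $ i))
                     \<and> (\<forall>k. d $ k < Re ((D *v v) $ k))"
  shows "saddle_point A (S1 \<alpha>1 B b) (S2 \<alpha>2 D d) us vs \<longleftrightarrow>
    (\<exists>\<rho>1 r1 lam1 \<beta>1 \<rho>2 r2 lam2 \<beta>2.
        P_optimal A B b D d \<alpha>1 \<alpha>2 vs lam1 \<beta>1 \<rho>1 r1 \<and>
        D_optimal A B b D d \<alpha>1 \<alpha>2 us lam2 \<beta>2 \<rho>2 r2)"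
proof
  assume saddle: "saddle_point A (S1 \<alpha>1 B b) (S2 \<alpha>2 D d) us vs"
  obtain lam1 \<beta>1 \<rho>1 r1 where "P_feasible A B D d \<alpha>2 vs lam1 \<beta>1 \<rho>1 r1"
    "P_obj b \<alpha>1 lam1 \<beta>1 \<rho>1 \<le> Re (cinner us (A *v vs))"
    using saddle_point_P_certificate[OF slater1 saddle] .
  moreover obtain lam2 \<beta>2 \<rho>2 r2 where "D_feasible A B b D \<alpha>1 us lam2 \<beta>2 \<rho>2 r2"
    "Re (cinner us (A *v vs)) \<le> D_obj d \<alpha>2 lam2 \<beta>2 \<rho>2"
    using saddle_point_D_certificate[OF slater2 saddle] .
  ultimately show "\<exists>\<rho>1 r1 lam1 \<beta>1 \<rho>2 r2 lam2 \<beta>2.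
      P_optimal A B b D d \<alpha>1 \<alpha>2 vs lam1 \<beta>1 \<rho>1 r1 \<and> D_optimal A B b D d \<alpha>1 \<alpha>2 us lam2 \<beta>2 \<rho>2 r2"
    using P_optimal_if_saddle_value[OF saddle] D_optimal_if_saddle_value[OF saddle] by blast
next
  assume "\<exists>\<rho>1 r1 lam1 \<beta>1 \<rho>2 r2 lam2 \<beta>2.
      P_optimal A B b D d \<alpha>1 \<alpha>2 vs lam1 \<beta>1 \<rho>1 r1 \<and> D_optimal A B b D d \<alpha>1 \<alpha>2 us lam2 \<beta>2 \<rho>2 r2"
  then show "saddle_point A (S1 \<alpha>1 B b) (S2 \<alpha>2 D d) us vs"
    using optimal_imp_saddle_point[OF slater1 slater2] by blast
qed

end
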